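(* Let $d>e\ge1$. The set $S_{d,e}\subseteq\mathbb{C}^{d+e-2}$ is compact.
   Context: For a tuple $(a_{d-1},\dots,a_1,b_{e-1},\dots,b_1)\in\mathbb{C}^{d+e-2}$ consider the correspondence $C=\{(x,y)\in\mathbb{C}^2: y^e+b_{e-1}y^{e-1}+\cdots+b_1y=x^d+a_{d-1}x^{d-1}+\cdots+a_1x\}$. Writing it as $g(y)=f(x)$, a critical point is $a\in\mathbb{C}$ with $f'(a)=0$ or $g'(b)=0$ for some $b$ with $g(b)=f(a)$. A path is a sequence $(x_n)_{n\ge0}$ with $(x_n,x_{n+1})\in C$ for all $n$, starting at $x_0$; it is bounded if $\sup_n|x_n|<\infty$. $S_{d,e}$ is the set of tuples for which every critical point of $C$ is the starting point of at least one bounded path. *)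

theory Defs
  imports "HOL-Analysis.Analysis"
begin

text \<open>A parameter tuple (a_{d-1},...,a_1,b_{e-1},...,b_1) in C^{d+e-2} is encoded as a
pair of coefficient functions (a, b) :: (nat => complex) x (nat => complex), where
a i is meaningful for 1 <= i <= d-1, b j for 1 <= j <= e-1, and all other entries are 0.
This zero-padding embeds C^{d+e-2} homeomorphically onto a closed subspace of the
product-topology space, so compactness is preserved both ways.\<close>

definition coeff_space :: "nat \<Rightarrow> nat \<Rightarrow> ((nat \<Rightarrow> complex) \<times> (nat \<Rightarrow> complex)) set" where
  "coeff_space d e = {(a, b). (\<forall>i. (i < 1 \<or> i > d - 1) \<longrightarrow> a i = 0) \<and>
                              (\<forall>j. (j < 1 \<or> j > e - 1) \<longrightarrow> b j = 0)}"

definition fpoly :: "nat \<Rightarrow> (nat \<Rightarrow> complex) \<Rightarrow> complex \<Rightarrow> complex" where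
  "fpoly d a x = x ^ d + (\<Sum>i=1..d-1. a i * x ^ i)"

definition critical_point :: "nat \<Rightarrow> nat \<Rightarrow> (nat \<Rightarrow> complex) \<Rightarrow> (nat \<Rightarrow> complex) \<Rightarrow> complex \<Rightarrow> bool" where
  "critical_point d e a b z \<longleftrightarrow>
     deriv (fpoly d a) z = 0 \<or>
     (\<exists>w. deriv (fpoly e b) w = 0 \<and> fpoly e b w = fpoly d a z)"

definition is_path :: "nat \<Rightarrow> nat \<Rightarrow> (nat \<Rightarrow> complex) \<Rightarrow> (nat \<Rightarrow> complex) \<Rightarrow> complex \<Rightarrow> (nat \<Rightarrow> complex) \<Rightarrow> bool" where
  "is_path d e a b z x \<longleftrightarrow> x 0 = z \<and> (\<forall>n. fpoly e b (x (Suc n)) = fpoly d a (x n))"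

definition S_set :: "nat \<Rightarrow> nat \<Rightarrow> ((nat \<Rightarrow> complex) \<times> (nat \<Rightarrow> complex)) set" where
  "S_set d e = {(a, b) \<in> coeff_space d e.
     \<forall>z. critical_point d e a b z \<longrightarrow>
        (\<exists>x. is_path d e a b z x \<and> bounded (range x))}"

end

theory Submission
  imports Defs "HOL-Computational_Algebra.Fundamental_Theorem_Algebra"
begin

text \<open>
  \<open>S\<^sub>d\<^sub>,\<^sub>e\<close> is closed: roots of polynomials depend continuously on the coefficients, so every
  critical point of a limit of parameters is a limit of critical points; bounded paths from these
  stay in a uniform disc, because beyond an escape radius \<open>|f(x)|\<close> grows like \<open>|x|\<^sup>d\<close> and forces
  \<open>|x\<^sub>n\<^sub>+\<^sub>1| > 2|x\<^sub>n|\<close>; a convergent subsequence of these paths is a bounded path for the limit.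

  \<open>S\<^sub>d\<^sub>,\<^sub>e\<close> is bounded: if parameters in \<open>S\<^sub>d\<^sub>,\<^sub>e\<close> had size \<open>M \<rightarrow> \<infinity>\<close>, rescale \<open>x \<mapsto> M x\<close> so that
  the coefficients have size \<open>1\<close>.  Since \<open>d > e\<close>, the rescaled \<open>f\<close> is \<open>O(1/M)\<close> along bounded paths,
  so in a limit every critical value of \<open>f\<close> vanishes; hence \<open>f = x\<^sup>d\<close>, then likewise \<open>g = y\<^sup>e\<close>,
  contradicting the normalisation.
\<close>

definition fpoly_poly :: "nat \<Rightarrow> (nat \<Rightarrow> complex) \<Rightarrow> complex poly" where
  "fpoly_poly d a = monom 1 d + (\<Sum>i=1..d-1. monom (a i) i)"

lemma coeff_fpoly_poly:
  assumes "d \<ge> 1"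
  shows "coeff (fpoly_poly d a) n = (if n = d then 1 else if n \<in> {1..d-1} then a n else 0)"
proof -
  have "coeff (\<Sum>i=1..d-1. monom (a i) i) n = (if n \<in> {1..d-1} then a n else 0)"
    by (simp add: coeff_sum coeff_monom sum.delta')
  then show ?thesis using assms by (auto simp: fpoly_poly_def coeff_monom)
qed

lemma fpoly_eq_poly: "fpoly d a = poly (fpoly_poly d a)"
  by (simp add: fun_eq_iff fpoly_poly_def fpoly_def poly_sum poly_monom)

lemma degree_fpoly_poly:
  assumes "d \<ge> 1" shows "degree (fpoly_poly d a) = d"
proof (rule antisym)
  show "degree (fpoly_poly d a) \<le> d"
    by (rule degree_le) (use assms in \<open>auto simp: coeff_fpoly_poly\<close>)
  show "d \<le> degree (fpoly_poly d a)"
    by (rule le_degree) (use assms in \<open>simp add: coeff_fpoly_poly\<close>)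
qed

lemma deriv_fpoly: "deriv (fpoly d a) z = poly (pderiv (fpoly_poly d a)) z"
  unfolding fpoly_eq_poly by (rule DERIV_imp_deriv) (rule poly_DERIV)

lemma fpoly_0: "d \<ge> 1 \<Longrightarrow> fpoly d a 0 = 0"
  unfolding fpoly_def by (auto intro!: sum.neutral)

lemma degree_fpoly_poly_minus_const:
  assumes "d \<ge> 1" shows "degree (fpoly_poly d a - [:c:]) = d"
proof -
  have "degree [:c:] < degree (fpoly_poly d a)"
    using assms by (simp add: degree_fpoly_poly)
  then show ?thesis
    using assms by (simp add: diff_conv_add_uminus degree_add_eq_left degree_fpoly_poly)
qed

lemma fpoly_surj:
  assumes "d \<ge> 1" obtains z where "fpoly d a z = c"
proof -
  have "\<not> constant (poly (fpoly_poly d a - [:c:]))"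
    using assms by (simp add: constant_degree degree_fpoly_poly_minus_const)
  then obtain z where "poly (fpoly_poly d a - [:c:]) z = 0"
    using fundamental_theorem_of_algebra by blast
  then show ?thesis using that by (simp add: fpoly_eq_poly)
qed

lemma tendsto_fpoly:
  assumes "\<And>i. (\<lambda>k. a k i) \<longlonglongrightarrow> a0 i" "x \<longlonglongrightarrow> x0"
  shows "(\<lambda>k. fpoly d (a k) (x k)) \<longlonglongrightarrow> fpoly d a0 x0"
  unfolding fpoly_def by (intro tendsto_intros assms)

lemma tendsto_coeff_fpoly_poly:
  assumes "d \<ge> 1" "\<And>i. (\<lambda>k. a k i) \<longlonglongrightarrow> a0 i"
  shows "(\<lambda>k. coeff (fpoly_poly d (a k)) n) \<longlonglongrightarrow> coeff (fpoly_poly d a0) n"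
  using assms by (cases "n = d"; cases "n \<in> {1..d-1}") (auto simp: coeff_fpoly_poly)

lemma exists_root_close:
  fixes p :: "complex poly"
  assumes "degree p = n" "n \<ge> 1"
  obtains r where "poly p r = 0" "cmod (lead_coeff p) * cmod (z - r) ^ n \<le> cmod (poly p z)"
proof -
  obtain root where root: "smult (lead_coeff p) (\<Prod>i<n. [:-root i, 1:]) = p"
    using complex_poly_decompose' assms(1) by metis
  have "{..<n} \<noteq> {}" using assms(2) by (simp add: lessThan_empty_iff)
  then obtain i0 where i0: "i0 < n" "\<And>i. i < n \<Longrightarrow> cmod (z - root i0) \<le> cmod (z - root i)"
    using arg_min_if_finite(1) arg_min_least[of "{..<n}" _ "\<lambda>i. cmod (z - root i)"]
    by (metis finite_lessThan lessThan_iff)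
  have poly_p: "poly p x = lead_coeff p * (\<Prod>i<n. x - root i)" for x
    by (subst root[symmetric]) (simp add: poly_prod)
  have "cmod (z - root i0) ^ n \<le> (\<Prod>i<n. cmod (z - root i))"
    using prod_mono[of "{..<n}" "\<lambda>_. cmod (z - root i0)" "\<lambda>i. cmod (z - root i)"] i0 by simp
  then have "cmod (lead_coeff p) * cmod (z - root i0) ^ n \<le> cmod (poly p z)"
    unfolding poly_p by (simp add: norm_mult prod_norm mult_left_mono)
  moreover have "poly p (root i0) = 0"
    unfolding poly_p using i0(1) by (auto simp: prod_zero_iff)
  ultimately show ?thesis using that by blast
qed

lemma poly_eq_sum_upto:
  fixes q :: "'a::comm_semiring_1 poly"
  assumes "degree q \<le> n"
  shows "poly q x = (\<Sum>i\<le>n. coeff q i * x ^ i)"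
  unfolding poly_altdef
  by (rule sum.mono_neutral_left) (use assms in \<open>auto simp: coeff_eq_0\<close>)

lemma tendsto_poly_of_coeffs:
  fixes p :: "nat \<Rightarrow> 'a::real_normed_field poly"
  assumes deg: "\<And>k. degree (p k) \<le> n" and coeffs: "\<And>i. (\<lambda>k. coeff (p k) i) \<longlonglongrightarrow> coeff q i"
  shows "(\<lambda>k. poly (p k) z) \<longlonglongrightarrow> poly q z"
proof -
  have "degree q \<le> n"
  proof (rule degree_le, intro allI impI)
    fix i assume "n < i"
    then have "coeff (p k) i = 0" for k
      using deg[of k] by (intro coeff_eq_0) simp
    with coeffs[of i] show "coeff q i = 0"
      by (simp add: LIMSEQ_const_iff)
  qed
  then have "(\<lambda>k. \<Sum>i\<le>n. coeff (p k) i * z ^ i) \<longlonglongrightarrow> poly q z"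
    by (simp add: poly_eq_sum_upto tendsto_intros coeffs)
  moreover have "poly (p k) z = (\<Sum>i\<le>n. coeff (p k) i * z ^ i)" for k
    using deg by (simp add: poly_eq_sum_upto)
  ultimately show ?thesis by simp
qed

lemma root_is_limit_of_roots:
  fixes p :: "nat \<Rightarrow> complex poly"
  assumes deg: "\<And>k. degree (p k) = n" and n: "n \<ge> 1"
    and coeffs: "\<And>i. (\<lambda>k. coeff (p k) i) \<longlonglongrightarrow> coeff q i"
    and lead: "coeff q n \<noteq> 0" and root: "poly q z = 0"
  obtains r where "\<And>k. poly (p k) (r k) = 0" "r \<longlonglongrightarrow> z"
proof -
  have poly_values: "(\<lambda>k. poly (p k) z) \<longlonglongrightarrow> 0"
    using tendsto_poly_of_coeffs[of p n q z] deg coeffs root by simp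
  have "\<exists>r. poly (p k) r = 0 \<and> cmod (lead_coeff (p k)) * cmod (z - r) ^ n \<le> cmod (poly (p k) z)" for k
    by (rule exists_root_close[OF deg n]) blast
  then obtain r where r_root: "\<And>k. poly (p k) (r k) = 0"
    and r_close: "\<And>k. cmod (lead_coeff (p k)) * cmod (z - r k) ^ n \<le> cmod (poly (p k) z)"
    by metis
  have lead_tendsto: "(\<lambda>k. lead_coeff (p k)) \<longlonglongrightarrow> coeff q n"
    using coeffs[of n] deg by simp
  define Y where "Y k = root n (cmod (poly (p k) z) / cmod (lead_coeff (p k)))" for k
  have "Y \<longlonglongrightarrow> root n (0 / cmod (coeff q n))"
    unfolding Y_def
    by (intro tendsto_real_root tendsto_divide tendsto_norm_zero poly_values tendsto_norm lead_tendsto)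
       (simp add: lead)
  then have Y: "Y \<longlonglongrightarrow> 0" by simp
  have "cmod (r k - z) \<le> Y k" for k
  proof -
    have "lead_coeff (p k) \<noteq> 0" using deg[of k] n by auto
    then have "cmod (z - r k) ^ n \<le> cmod (poly (p k) z) / cmod (lead_coeff (p k))"
      using r_close[of k] by (simp add: field_simps)
    then have "root n (cmod (z - r k) ^ n) \<le> Y k"
      unfolding Y_def using n by simp
    then show ?thesis using n by (simp add: real_root_power_cancel norm_minus_commute)
  qed
  then have "(\<lambda>k. r k - z) \<longlonglongrightarrow> 0"
    by (intro Lim_null_comparison[OF _ Y]) simp
  then show ?thesis by (intro that[OF r_root]) (simp add: LIM_zero_iff)
qed

lemma fpoly_value_is_limit:
  assumes "d \<ge> 1" "\<And>i. (\<lambda>k. a k i) \<longlonglongrightarrow> a0 i" "c \<longlonglongrightarrow> fpoly d a0 z"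
  obtains zk where "\<And>k. fpoly d (a k) (zk k) = c k" "zk \<longlonglongrightarrow> z"
proof -
  obtain zk where zk: "\<And>k. poly (fpoly_poly d (a k) - [:c k:]) (zk k) = 0" "zk \<longlonglongrightarrow> z"
  proof (rule root_is_limit_of_roots[OF degree_fpoly_poly_minus_const[OF assms(1)] assms(1)])
    show "(\<lambda>k. coeff (fpoly_poly d (a k) - [:c k:]) i) \<longlonglongrightarrow> coeff (fpoly_poly d a0 - [:fpoly d a0 z:]) i" for i
      by (cases i) (auto intro!: tendsto_intros tendsto_coeff_fpoly_poly assms)
    show "coeff (fpoly_poly d a0 - [:fpoly d a0 z:]) d \<noteq> 0"
      using assms(1) by (cases d) (auto simp: coeff_fpoly_poly)
  qed (auto simp: fpoly_eq_poly)
  then show ?thesis using zk by (intro that[of zk]) (simp_all add: fpoly_eq_poly)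
qed

lemma fpoly_critical_point_is_limit:
  assumes "\<And>i. (\<lambda>k. a k i) \<longlonglongrightarrow> a0 i" "deriv (fpoly d a0) z = 0"
  obtains zk where "\<And>k. deriv (fpoly d (a k)) (zk k) = 0" "zk \<longlonglongrightarrow> z"
proof (cases "d = 0")
  case True
  then have "fpoly d b = (\<lambda>_. 1)" for b by (simp add: fpoly_def fun_eq_iff)
  then show ?thesis using that[of "\<lambda>_. z"] by simp
next
  case False
  have "pderiv (fpoly_poly d a0) \<noteq> 0"
    using False by (simp add: pderiv_eq_0_iff degree_fpoly_poly)
  then have "0 < degree (pderiv (fpoly_poly d a0))"
    using assms(2) by (metis deriv_fpoly poly_zero not_gr_zero)
  then have "d - 1 \<ge> 1"
    using False by (simp add: degree_pderiv degree_fpoly_poly)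
  obtain zk where zk: "\<And>k. poly (pderiv (fpoly_poly d (a k))) (zk k) = 0" "zk \<longlonglongrightarrow> z"
  proof (rule root_is_limit_of_roots[where n = "d - 1", OF _ \<open>d - 1 \<ge> 1\<close>])
    show "degree (pderiv (fpoly_poly d (a k))) = d - 1" for k
      using False by (simp add: degree_pderiv degree_fpoly_poly)
    show "(\<lambda>k. coeff (pderiv (fpoly_poly d (a k))) i) \<longlonglongrightarrow> coeff (pderiv (fpoly_poly d a0)) i" for i
      unfolding coeff_pderiv using False by (intro tendsto_intros tendsto_coeff_fpoly_poly assms) simp
    show "coeff (pderiv (fpoly_poly d a0)) (d - 1) \<noteq> 0"
      using False by (simp add: coeff_pderiv coeff_fpoly_poly)
  qed (use assms(2) in \<open>auto simp: deriv_fpoly\<close>)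
  then show ?thesis using zk by (intro that[of zk]) (simp_all add: deriv_fpoly)
qed

lemma degree_eq_sum_order:
  fixes p :: "complex poly"
  assumes "p \<noteq> 0"
  shows "degree p = (\<Sum>z | poly p z = 0. order z p)"
proof -
  have "degree p = degree (\<Prod>z | poly p z = 0. [:-z, 1:] ^ order z p)"
    using assms by (subst (1) complex_poly_decompose[symmetric]) simp
  also have "\<dots> = (\<Sum>z | poly p z = 0. order z p)"
    by (simp add: degree_prod_sum_eq degree_linear_power)
  finally show ?thesis .
qed

text \<open>A polynomial of degree \<open>n\<close> with \<open>n - 1\<close> critical points (with multiplicity) all among
  its roots can have only one root, since each root of \<open>p\<close> of order \<open>m\<close> is a root of \<open>p'\<close> of
  order \<open>m - 1\<close>.\<close>
lemma monom_if_critical_points_are_roots: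
  fixes p :: "complex poly"
  assumes deg: "degree p = n" "n \<ge> 1" and monic: "lead_coeff p = 1" and "poly p 0 = 0"
    and crit: "\<And>z. poly (pderiv p) z = 0 \<Longrightarrow> poly p z = 0"
  shows "p = monom 1 n"
proof -
  have p: "p \<noteq> 0" and p': "pderiv p \<noteq> 0"
    using deg by (auto simp: pderiv_eq_0_iff)
  define R where "R = {z. poly p z = 0}"
  have "finite R" unfolding R_def using p by (rule poly_roots_finite)
  have "n - 1 = (\<Sum>z | poly (pderiv p) z = 0. order z (pderiv p))"
    using deg degree_eq_sum_order[OF p'] by (simp add: degree_pderiv)
  also have "\<dots> = (\<Sum>z\<in>R. order z (pderiv p))"
  proof (rule sum.mono_neutral_left[OF \<open>finite R\<close>])
    show "{z. poly (pderiv p) z = 0} \<subseteq> R" using crit by (auto simp: R_def)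
  qed (simp add: order_root)
  finally have "n - 1 = (\<Sum>z\<in>R. order z (pderiv p))" .
  moreover have "n = (\<Sum>z\<in>R. Suc (order z (pderiv p)))"
    using degree_eq_sum_order[OF p] deg unfolding R_def
    by (intro trans[OF _ sum.cong[OF refl order_pderiv[OF p]]]) auto
  ultimately have "card R = 1"
    using deg by (simp add: sum_Suc)
  moreover have "0 \<in> R" using \<open>poly p 0 = 0\<close> by (simp add: R_def)
  ultimately have "R = {0}" by (metis card_1_singletonE singletonD)
  then have "p = [:0, 1:] ^ order 0 p"
    using complex_poly_decompose[of p] monic by (simp add: R_def)
  moreover from this have "order 0 p = n"
    using deg by (metis degree_linear_power)
  ultimately show ?thesis by (simp add: monom_altdef)
qed

lemma coeffs_zero_if_critical_values_zero:
  assumes "1 \<le> d" "\<And>z. deriv (fpoly d a) z = 0 \<Longrightarrow> fpoly d a z = 0" "i \<in> {1..d-1}"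
  shows "a i = 0"
proof -
  have "fpoly_poly d a = monom 1 d"
  proof (rule monom_if_critical_points_are_roots)
    show "poly (fpoly_poly d a) 0 = 0"
      using fpoly_0[OF assms(1)] by (simp add: fpoly_eq_poly)
    show "poly (fpoly_poly d a) z = 0" if "poly (pderiv (fpoly_poly d a)) z = 0" for z
      using assms(2)[of z, unfolded deriv_fpoly] that by (simp add: fpoly_eq_poly)
  qed (use assms(1) in \<open>simp_all add: degree_fpoly_poly coeff_fpoly_poly\<close>)
  then have "coeff (fpoly_poly d a) i = 0" using assms(3) by (auto simp: coeff_monom)
  then show ?thesis using assms by (auto simp: coeff_fpoly_poly split: if_splits)
qed

lemma norm_power_le_fpoly:
  assumes "cmod u \<le> r"
  shows "cmod u ^ d \<le> cmod (fpoly d a u) + (\<Sum>i=1..d-1. cmod (a i) * r ^ i)"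
proof -
  have "cmod (u ^ d) \<le> cmod (fpoly d a u) + cmod (\<Sum>i=1..d-1. a i * u ^ i)"
    unfolding fpoly_def by (metis add_diff_cancel_right' norm_triangle_ineq4)
  also have "cmod (\<Sum>i=1..d-1. a i * u ^ i) \<le> (\<Sum>i=1..d-1. cmod (a i) * r ^ i)"
    using assms by (intro order_trans[OF norm_sum sum_mono])
       (auto simp: norm_mult norm_power intro!: mult_left_mono power_mono)
  finally show ?thesis by (simp add: norm_power)
qed

lemma tendsto_0_if_fpoly_tendsto_0:
  assumes "1 \<le> d" "\<And>i. (\<lambda>k. \<alpha> k i) \<longlonglongrightarrow> a i" "\<forall>i\<in>{1..d-1}. a i = 0"
    and bounded: "eventually (\<lambda>k. cmod (u k) \<le> r) sequentially"
    and "(\<lambda>k. fpoly d (\<alpha> k) (u k)) \<longlonglongrightarrow> 0"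
  shows "u \<longlonglongrightarrow> 0"
proof -
  have "(\<lambda>k. cmod (fpoly d (\<alpha> k) (u k)) + (\<Sum>i=1..d-1. cmod (\<alpha> k i) * r ^ i))
          \<longlonglongrightarrow> 0 + (\<Sum>i=1..d-1. cmod (a i) * r ^ i)"
    by (intro tendsto_intros tendsto_norm_zero assms)
  then have majorant: "(\<lambda>k. cmod (fpoly d (\<alpha> k) (u k)) + (\<Sum>i=1..d-1. cmod (\<alpha> k i) * r ^ i)) \<longlonglongrightarrow> 0"
    using assms(3) by simp
  have "eventually (\<lambda>k. norm (cmod (u k) ^ d) \<le>
          cmod (fpoly d (\<alpha> k) (u k)) + (\<Sum>i=1..d-1. cmod (\<alpha> k i) * r ^ i)) sequentially"
    using bounded by eventually_elim (metis norm_power_le_fpoly real_norm_def abs_of_nonneg norm_ge_zero zero_le_power)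
  then have "(\<lambda>k. cmod (u k) ^ d) \<longlonglongrightarrow> 0"
    by (rule Lim_null_comparison[OF _ majorant])
  then have "(\<lambda>k. root d (cmod (u k) ^ d)) \<longlonglongrightarrow> root d 0"
    by (rule tendsto_real_root)
  then show ?thesis using assms(1) by (simp add: real_root_power_cancel tendsto_norm_zero_iff)
qed

section \<open>Escape from large discs\<close>

definition coeffs_dominated :: "nat \<Rightarrow> real \<Rightarrow> (nat \<Rightarrow> complex) \<Rightarrow> bool" where
  "coeffs_dominated d M a \<longleftrightarrow> (\<forall>i\<in>{1..d-1}. cmod (a i) \<le> M ^ (d - i))"

lemma coeffs_dominated_mono:
  assumes "coeffs_dominated d M a" "0 \<le> M" "M \<le> M'"
  shows "coeffs_dominated d M' a"
  using assms unfolding coeffs_dominated_def by (meson order_trans power_mono)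

lemma norm_lower_terms_le:
  assumes "coeffs_dominated d M a" "0 \<le> M" "M \<le> t" "cmod x \<le> t"
  shows "cmod (\<Sum>i=1..d-1. a i * x ^ i) \<le> real (d - 1) * M * t ^ (d - 1)"
proof -
  have "cmod (a i * x ^ i) \<le> M * t ^ (d - 1)" if i: "i \<in> {1..d-1}" for i
  proof -
    have split: "d - i = Suc (d - 1 - i)" "d - 1 = (d - 1 - i) + i" using i by auto
    have "cmod (a i * x ^ i) \<le> M ^ (d - i) * t ^ i"
      using assms i unfolding coeffs_dominated_def
      by (auto simp: norm_mult norm_power intro!: mult_mono power_mono)
    also have "\<dots> = M * (M ^ (d - 1 - i) * t ^ i)" by (simp add: split(1))
    also have "\<dots> \<le> M * (t ^ (d - 1 - i) * t ^ i)"
      using assms by (intro mult_left_mono mult_right_mono power_mono) auto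
    also have "\<dots> = M * t ^ (d - 1)" by (metis split(2) power_add)
    finally show ?thesis .
  qed
  then have "(\<Sum>i=1..d-1. cmod (a i * x ^ i)) \<le> (\<Sum>i=1..d-1. M * t ^ (d - 1))"
    by (rule sum_mono)
  then show ?thesis using norm_sum order_trans by fastforce
qed

lemma norm_fpoly_ge:
  assumes "coeffs_dominated d M a" "0 \<le> M" "M \<le> cmod x"
  shows "cmod x ^ d - real (d - 1) * M * cmod x ^ (d - 1) \<le> cmod (fpoly d a x)"
proof -
  have "cmod (x ^ d) - cmod (\<Sum>i=1..d-1. a i * x ^ i) \<le> cmod (fpoly d a x)"
    unfolding fpoly_def by (metis norm_diff_ineq norm_minus_cancel diff_minus_eq_add)
  then show ?thesis using norm_lower_terms_le[OF assms order_refl] by (simp add: norm_power)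
qed

lemma norm_fpoly_le:
  assumes "coeffs_dominated e M b" "0 \<le> M" "M \<le> s" "cmod y \<le> s" "e \<ge> 1"
  shows "cmod (fpoly e b y) \<le> e * s ^ e"
proof -
  have "cmod (fpoly e b y) \<le> cmod (y ^ e) + cmod (\<Sum>j=1..e-1. b j * y ^ j)"
    unfolding fpoly_def by (rule norm_triangle_ineq)
  also have "\<dots> \<le> s ^ e + real (e - 1) * s * s ^ (e - 1)"
    using norm_lower_terms_le[OF coeffs_dominated_mono[OF assms(1,2,3)]] assms
    by (intro add_mono) (auto simp: norm_power power_mono)
  also have "\<dots> = e * s ^ e"
    using assms(5) by (cases e) (auto simp: algebra_simps)
  finally show ?thesis .
qed

definition escape_radius :: "nat \<Rightarrow> nat \<Rightarrow> real \<Rightarrow> real" where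
  "escape_radius d e M = 2 * real d * M + real e * 2 ^ (e + 1) + 1"

text \<open>Outside the escape radius the degree-\<open>d\<close> side dominates: \<open>|f(x)| \<ge> |x|\<^sup>d/2\<close>, whereas
  \<open>|y| \<le> 2|x|\<close> would force \<open>|g(y)| \<le> e (2|x|)\<^sup>e < |x|\<^sup>d/2\<close>.\<close>
lemma escape_step:
  assumes de: "e < d" "1 \<le> e" and "0 \<le> M"
    and dom: "coeffs_dominated d M a" "coeffs_dominated e M b"
    and x: "escape_radius d e M \<le> cmod x" and rel: "fpoly e b y = fpoly d a x"
  shows "2 * cmod x < cmod y"
proof (rule ccontr)
  assume "\<not> 2 * cmod x < cmod y"
  then have y: "cmod y \<le> 2 * cmod x" by simp
  define t where "t = cmod x"
  have "0 \<le> 2 * real d * M" "0 \<le> real e * 2 ^ (e + 1)" using \<open>0 \<le> M\<close> by auto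
  then have t: "1 \<le> t" "2 * real d * M \<le> t" "real e * 2 ^ (e + 1) < t"
    using x unfolding escape_radius_def t_def by linarith+
  have "1 * M \<le> 2 * real d * M" using \<open>0 \<le> M\<close> de by (intro mult_right_mono) auto
  then have "M \<le> t" using t by linarith
  have "real (d - 1) * M \<le> t / 2"
    using t(2) \<open>0 \<le> M\<close> mult_right_mono[of "real (d - 1)" "real d" M] by simp
  then have "real (d - 1) * M * t ^ (d - 1) \<le> t / 2 * t ^ (d - 1)"
    using t by (intro mult_right_mono) auto
  moreover have "t / 2 * t ^ (d - 1) = t ^ d / 2" using de by (cases d) auto
  ultimately have f_large: "t ^ d / 2 \<le> cmod (fpoly d a x)"
    using norm_fpoly_ge[OF dom(1) \<open>0 \<le> M\<close>, of x] \<open>M \<le> t\<close> unfolding t_def by linarith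
  have "cmod (fpoly e b y) \<le> e * (2 * t) ^ e"
    using norm_fpoly_le[OF dom(2) \<open>0 \<le> M\<close>, of "2 * t" y] \<open>M \<le> t\<close> y de t unfolding t_def by simp
  also have "\<dots> = real e * 2 ^ (e + 1) * t ^ e / 2" by (simp add: power_mult_distrib)
  also have "\<dots> < t * t ^ e / 2" using t by (intro divide_strict_right_mono mult_strict_right_mono) auto
  also have "\<dots> \<le> t ^ d / 2" using t de by (simp add: power_increasing flip: power_Suc)
  finally show False using f_large rel by simp
qed

lemma bounded_path_within_escape_radius:
  assumes "e < d" "1 \<le> e" "0 \<le> M" "coeffs_dominated d M a" "coeffs_dominated e M b"
    and path: "is_path d e a b z x" and "bounded (range x)"
  shows "cmod (x n) < escape_radius d e M"
proof (rule ccontr)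
  assume "\<not> cmod (x n) < escape_radius d e M"
  then have start: "escape_radius d e M \<le> cmod (x n)" by simp
  have R: "1 \<le> escape_radius d e M" using \<open>0 \<le> M\<close> unfolding escape_radius_def by simp
  have grow: "2 ^ k * escape_radius d e M \<le> cmod (x (n + k))" for k
  proof (induction k)
    case (Suc k)
    then have "escape_radius d e M \<le> cmod (x (n + k))"
      using R by (smt (verit) one_le_power mult_le_cancel_right1)
    then have "2 * cmod (x (n + k)) < cmod (x (Suc (n + k)))"
      using path unfolding is_path_def by (intro escape_step[OF assms(1-5)]) auto
    then show ?case using Suc by simp
  qed (use start in simp)
  obtain B where B: "\<And>m. cmod (x m) \<le> B" using \<open>bounded (range x)\<close> unfolding bounded_iff by auto
  define k where "k = nat \<lceil>B\<rceil>"
  have "B < 2 ^ k" unfolding k_def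
    by (metis of_nat_less_numeral_power_cancel_iff less_exp real_nat_ceiling_ge order.strict_trans1)
  also have "\<dots> \<le> 2 ^ k * escape_radius d e M" using R by simp
  finally show False using grow[of k] B[of "n + k"] by linarith
qed

section \<open>Closedness\<close>

lemma compact_bounded_sequences: "compact {x :: nat \<Rightarrow> complex. \<forall>n. cmod (x n) \<le> R}"
proof -
  have "{x :: nat \<Rightarrow> complex. \<forall>n. cmod (x n) \<le> R} = PiE UNIV (\<lambda>_. cball 0 R)"
    by (auto simp: PiE_def Pi_def extensional_def)
  then show ?thesis
    using compactin_PiE[of "\<lambda>_. euclidean" UNIV "\<lambda>_::nat. cball (0::complex) R"]
    by (simp add: euclidean_product_topology)
qed

lemma tendsto_apply:
  fixes X :: "'a \<Rightarrow> 'b \<Rightarrow> 'c::topological_space"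
  assumes "(X \<longlongrightarrow> l) F" shows "((\<lambda>k. X k i) \<longlongrightarrow> l i) F"
  by (rule continuous_on_tendsto_compose[OF continuous_on_product_coordinates assms]) auto

lemma convergent_coeffs_dominated:
  assumes "\<And>i. (\<lambda>k. A k i) \<longlonglongrightarrow> a i"
  obtains M where "1 \<le> M" "\<And>k. coeffs_dominated d M (A k)"
proof -
  have "(\<lambda>k. \<Sum>i=1..d-1. cmod (A k i)) \<longlonglongrightarrow> (\<Sum>i=1..d-1. cmod (a i))"
    by (intro tendsto_intros assms)
  then have "convergent (\<lambda>k. \<Sum>i=1..d-1. cmod (A k i))"
    by (rule convergentI)
  then obtain C where C: "\<And>k. (\<Sum>i=1..d-1. cmod (A k i)) \<le> C"
    using convergent_imp_Bseq Bseq_def by (metis abs_le_D1 real_norm_def)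
  have "coeffs_dominated d (max 1 C) (A k)" for k
    unfolding coeffs_dominated_def
  proof
    fix i assume i: "i \<in> {1..d-1}"
    have "cmod (A k i) \<le> (\<Sum>i=1..d-1. cmod (A k i))"
      using i by (intro member_le_sum) auto
    also have "\<dots> \<le> max 1 C" using C[of k] by simp
    also have "\<dots> \<le> max 1 C ^ (d - i)" using i by (intro self_le_power) auto
    finally show "cmod (A k i) \<le> max 1 C ^ (d - i)" .
  qed
  then show ?thesis using that[of "max 1 C"] by simp
qed

lemma critical_point_is_limit:
  assumes "1 \<le> d" "\<And>i. (\<lambda>k. A k i) \<longlonglongrightarrow> a i" "\<And>j. (\<lambda>k. B k j) \<longlonglongrightarrow> b j"
    and "critical_point d e a b z"
  obtains zk where "\<And>k. critical_point d e (A k) (B k) (zk k)" "zk \<longlonglongrightarrow> z"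
  using \<open>critical_point d e a b z\<close> unfolding critical_point_def
proof (elim disjE exE conjE)
  assume "deriv (fpoly d a) z = 0"
  then obtain zk where "\<And>k. deriv (fpoly d (A k)) (zk k) = 0" "zk \<longlonglongrightarrow> z"
    using fpoly_critical_point_is_limit[of A a, OF assms(2)] by metis
  then show ?thesis using that unfolding critical_point_def by blast
next
  fix w assume w: "deriv (fpoly e b) w = 0" "fpoly e b w = fpoly d a z"
  obtain wk where wk: "\<And>k. deriv (fpoly e (B k)) (wk k) = 0" "wk \<longlonglongrightarrow> w"
    using fpoly_critical_point_is_limit[of B b, OF assms(3) w(1)] by metis
  have "(\<lambda>k. fpoly e (B k) (wk k)) \<longlonglongrightarrow> fpoly d a z"
    using tendsto_fpoly[of B b wk w e, OF assms(3) wk(2)] w(2) by simp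
  then obtain zk where "\<And>k. fpoly d (A k) (zk k) = fpoly e (B k) (wk k)" "zk \<longlonglongrightarrow> z"
    using fpoly_value_is_limit[of d A a, OF assms(1,2)] by metis
  then show ?thesis using that wk(1) unfolding critical_point_def by metis
qed

lemma bounded_path_of_limit:
  assumes "\<And>i. (\<lambda>k. A k i) \<longlonglongrightarrow> a i" "\<And>j. (\<lambda>k. B k j) \<longlonglongrightarrow> b j" "zk \<longlonglongrightarrow> z"
    and paths: "\<And>k. is_path d e (A k) (B k) (zk k) (X k)" and bound: "\<And>k n. cmod (X k n) \<le> R"
  shows "\<exists>x. is_path d e a b z x \<and> bounded (range x)"
proof -
  obtain x h where x: "x \<in> {x. \<forall>n. cmod (x n) \<le> R}" and h: "strict_mono h" and "(X \<circ> h) \<longlonglongrightarrow> x"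
    using seq_compactE[OF compact_imp_seq_compact[OF compact_bounded_sequences]] bound by blast
  then have X: "(\<lambda>k. X (h k) n) \<longlonglongrightarrow> x n" for n
    using tendsto_apply by (simp add: o_def)
  have A: "(\<lambda>k. A (h k) i) \<longlonglongrightarrow> a i" and B: "(\<lambda>k. B (h k) i) \<longlonglongrightarrow> b i" for i
    using LIMSEQ_subseq_LIMSEQ[OF assms(1) h] LIMSEQ_subseq_LIMSEQ[OF assms(2) h] by (simp_all add: o_def)
  have "(\<lambda>k. X (h k) 0) \<longlonglongrightarrow> z"
    using LIMSEQ_subseq_LIMSEQ[OF assms(3) h] paths unfolding is_path_def by (simp add: o_def)
  then have "x 0 = z" using X LIMSEQ_unique by blast
  moreover have "fpoly e b (x (Suc n)) = fpoly d a (x n)" for n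
  proof -
    have "(\<lambda>k. fpoly e (B (h k)) (X (h k) (Suc n))) \<longlonglongrightarrow> fpoly e b (x (Suc n))"
      by (rule tendsto_fpoly[of "\<lambda>k. B (h k)" b, OF B X])
    moreover have "(\<lambda>k. fpoly e (B (h k)) (X (h k) (Suc n))) \<longlonglongrightarrow> fpoly d a (x n)"
      using tendsto_fpoly[of "\<lambda>k. A (h k)" a, OF A X, of d n] paths unfolding is_path_def by simp
    ultimately show ?thesis by (rule LIMSEQ_unique)
  qed
  moreover have "bounded (range x)" using x unfolding bounded_iff by auto
  ultimately show ?thesis unfolding is_path_def by blast
qed

lemma bounded_paths_from_critical_points:
  assumes "\<And>k. (A k, B k) \<in> S_set d e" "\<And>k. critical_point d e (A k) (B k) (z k)"
  obtains X where "\<And>k. is_path d e (A k) (B k) (z k) (X k)" "\<And>k. bounded (range (X k))"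
proof -
  have "\<forall>k. \<exists>x. is_path d e (A k) (B k) (z k) x \<and> bounded (range x)"
    using assms unfolding S_set_def by blast
  then show ?thesis using that by metis
qed

lemma closed_coeff_space: "closed (coeff_space d e)"
proof -
  have "coeff_space d e = (\<Inter>i\<in>- {1..d-1}. {p. fst p i = 0}) \<inter> (\<Inter>j\<in>- {1..e-1}. {p. snd p j = 0})"
    by (auto simp: coeff_space_def not_less_eq_eq)
  moreover have "closed {p :: (nat \<Rightarrow> complex) \<times> (nat \<Rightarrow> complex). fst p i = 0}"
    and "closed {p :: (nat \<Rightarrow> complex) \<times> (nat \<Rightarrow> complex). snd p i = 0}" for i
    by (intro closed_Collect_eq continuous_intros
          continuous_on_compose2[OF continuous_on_product_coordinates]; simp)+
  ultimately show ?thesis by (simp add: closed_INT closed_Int)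
qed

lemma closed_S_set:
  assumes "e < d" "1 \<le> e"
  shows "closed (S_set d e)"
  unfolding closed_sequential_limits
proof (intro allI impI, elim conjE)
  fix s and l :: "(nat \<Rightarrow> complex) \<times> (nat \<Rightarrow> complex)"
  assume S: "\<forall>k. s k \<in> S_set d e" and "s \<longlonglongrightarrow> l"
  obtain a b where l: "l = (a, b)" by (cases l)
  define A B where "A k = fst (s k)" and "B k = snd (s k)" for k
  have AB_S: "(A k, B k) \<in> S_set d e" for k using S by (simp add: A_def B_def)
  have A: "(\<lambda>k. A k i) \<longlonglongrightarrow> a i" and B: "(\<lambda>k. B k i) \<longlonglongrightarrow> b i" for i
    using tendsto_apply[OF tendsto_fst[OF \<open>s \<longlonglongrightarrow> l\<close>]] tendsto_apply[OF tendsto_snd[OF \<open>s \<longlonglongrightarrow> l\<close>]]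
    by (simp_all add: A_def B_def l)
  have "s k \<in> coeff_space d e" for k
    using S[rule_format, of k] by (cases "s k") (simp add: S_set_def)
  then have "(a, b) \<in> coeff_space d e"
    using closed_sequentially[OF closed_coeff_space _ \<open>s \<longlonglongrightarrow> l\<close>] by (simp add: l)
  moreover obtain MA MB where MA: "1 \<le> MA" "\<And>k. coeffs_dominated d MA (A k)"
    and MB: "1 \<le> MB" "\<And>k. coeffs_dominated e MB (B k)"
    using convergent_coeffs_dominated[of A a, OF A] convergent_coeffs_dominated[of B b, OF B]
    by metis
  define M where "M = max MA MB"
  have M: "1 \<le> M" "\<And>k. coeffs_dominated d M (A k)" "\<And>k. coeffs_dominated e M (B k)"
    using MA MB coeffs_dominated_mono[of d MA _ M] coeffs_dominated_mono[of e MB _ M]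
    by (auto simp: M_def)
  have "\<exists>x. is_path d e a b z x \<and> bounded (range x)" if z: "critical_point d e a b z" for z
  proof -
    obtain zk where crit: "\<And>k. critical_point d e (A k) (B k) (zk k)" and "zk \<longlonglongrightarrow> z"
      using critical_point_is_limit[of d A a B b, OF _ A B z] assms by auto
    obtain X where X: "\<And>k. is_path d e (A k) (B k) (zk k) (X k)" "\<And>k. bounded (range (X k))"
      using bounded_paths_from_critical_points[of A B, OF AB_S crit] by blast
    show ?thesis
      using bounded_path_within_escape_radius[OF assms _ M(2,3) X] M(1)
      by (intro bounded_path_of_limit[where R = "escape_radius d e M", OF A B \<open>zk \<longlonglongrightarrow> z\<close> X(1)]) (simp add: less_imp_le)
  qed
  ultimately show "l \<in> S_set d e" by (simp add: S_set_def l)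
qed

section \<open>Boundedness\<close>

text \<open>The smallest \<open>M\<close> with \<open>|a\<^sub>i| \<le> M\<^sup>d\<^sup>-\<^sup>i\<close> and \<open>|b\<^sub>j| \<le> M\<^sup>e\<^sup>-\<^sup>j\<close>: the size of the parameters
  with respect to the weights making the correspondence homogeneous under \<open>x \<mapsto> M x\<close>.\<close>
definition param_size :: "nat \<Rightarrow> nat \<Rightarrow> (nat \<Rightarrow> complex) \<Rightarrow> (nat \<Rightarrow> complex) \<Rightarrow> real" where
  "param_size d e a b = Max ((\<lambda>i. root (d - i) (cmod (a i))) ` {1..d-1} \<union>
                            (\<lambda>j. root (e - j) (cmod (b j))) ` {1..e-1})"

lemma root_le_param_size:
  "i \<in> {1..d-1} \<Longrightarrow> root (d - i) (cmod (a i)) \<le> param_size d e a b"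
  "j \<in> {1..e-1} \<Longrightarrow> root (e - j) (cmod (b j)) \<le> param_size d e a b"
  unfolding param_size_def by (auto intro!: Max_ge)

lemma le_power_if_root_le: "0 < n \<Longrightarrow> 0 \<le> x \<Longrightarrow> root n x \<le> M \<Longrightarrow> x \<le> M ^ n"
  by (metis power_mono real_root_ge_zero real_root_pow_pos2)

lemma coeffs_dominated_param_size:
  "coeffs_dominated d (param_size d e a b) a" "coeffs_dominated e (param_size d e a b) b"
  unfolding coeffs_dominated_def by (auto intro!: le_power_if_root_le root_le_param_size)

lemma param_size_nonneg:
  assumes "2 \<le> d" shows "0 \<le> param_size d e a b"
proof -
  have "1 \<in> {1..d-1}" using assms by auto
  then show ?thesis by (meson order_trans real_root_ge_zero norm_ge_zero root_le_param_size(1))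
qed

lemma param_size_attained:
  assumes "2 \<le> d"
  shows "(\<exists>i\<in>{1..d-1}. cmod (a i) = param_size d e a b ^ (d - i)) \<or>
         (\<exists>j\<in>{1..e-1}. cmod (b j) = param_size d e a b ^ (e - j))"
proof -
  have "param_size d e a b \<in> (\<lambda>i. root (d - i) (cmod (a i))) ` {1..d-1} \<union>
                            (\<lambda>j. root (e - j) (cmod (b j))) ` {1..e-1}"
    unfolding param_size_def using assms by (intro Max_in) auto
  then show ?thesis
  proof (elim UnE imageE)
    fix i assume "param_size d e a b = root (d - i) (cmod (a i))" "i \<in> {1..d-1}"
    then show ?thesis by (intro disjI1 bexI[of _ i]) auto
  next
    fix j assume "param_size d e a b = root (e - j) (cmod (b j))" "j \<in> {1..e-1}"
    then show ?thesis by (intro disjI2 bexI[of _ j]) auto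
  qed
qed

lemma coeff_space_zero:
  assumes "(a, b) \<in> coeff_space d e"
  shows "i \<notin> {1..d-1} \<Longrightarrow> a i = 0" "j \<notin> {1..e-1} \<Longrightarrow> b j = 0"
  using assms by (auto simp: coeff_space_def not_less_eq_eq)

definition rescale :: "nat \<Rightarrow> real \<Rightarrow> (nat \<Rightarrow> complex) \<Rightarrow> nat \<Rightarrow> complex" where
  "rescale d M a i = a i / of_real M ^ (d - i)"

lemma fpoly_rescale:
  assumes "M \<noteq> 0"
  shows "fpoly d a (of_real M * u) = of_real M ^ d * fpoly d (rescale d M a) u"
proof -
  have "a i * (of_real M * u) ^ i = of_real M ^ d * (rescale d M a i * u ^ i)" if "i \<in> {1..d-1}" for i
  proof -
    have "d - i + i = d" using that by auto
    then have "of_real M ^ d = (of_real M ^ (d - i) * of_real M ^ i :: complex)"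
      by (metis power_add)
    then show ?thesis using assms by (simp add: rescale_def power_mult_distrib field_simps)
  qed
  then have "(\<Sum>i=1..d-1. a i * (of_real M * u) ^ i) = (\<Sum>i=1..d-1. of_real M ^ d * (rescale d M a i * u ^ i))"
    by (rule sum.cong[OF refl])
  then show ?thesis
    unfolding fpoly_def by (simp add: sum_distrib_left power_mult_distrib algebra_simps)
qed

lemma deriv_fpoly_rescale_eq_0_iff:
  assumes "M \<noteq> 0"
  shows "deriv (fpoly d a) (of_real M * c) = 0 \<longleftrightarrow> deriv (fpoly d (rescale d M a)) c = 0"
proof -
  let ?M = "of_real M :: complex" and ?p = "fpoly_poly d (rescale d M a)"
  have "fpoly d a x = ?M ^ d * fpoly d (rescale d M a) (x / ?M)" for x
    using fpoly_rescale[OF assms, of d a "x / ?M"] assms by simp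
  then have "fpoly d a = (\<lambda>x. ?M ^ d * poly ?p (x / ?M))"
    by (simp add: fun_eq_iff fpoly_eq_poly)
  moreover have "((\<lambda>x. ?M ^ d * poly ?p (x / ?M)) has_field_derivative
                   ?M ^ d * (poly (pderiv ?p) (?M * c / ?M) * (1 / ?M))) (at (?M * c))"
    by (intro DERIV_cmult DERIV_chain2[OF poly_DERIV] DERIV_cdivide[OF DERIV_ident])
  ultimately have "deriv (fpoly d a) (?M * c) = ?M ^ d * (poly (pderiv ?p) c * (1 / ?M))"
    using assms by (simp add: DERIV_imp_deriv)
  then show ?thesis using assms by (simp add: deriv_fpoly)
qed

lemma fpoly_rescale_eq_iff:
  assumes "M \<noteq> 0"
  shows "fpoly d a (of_real M * u) = fpoly d a (of_real M * v) \<longleftrightarrow>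
         fpoly d (rescale d M a) u = fpoly d (rescale d M a) v"
  using assms by (simp add: fpoly_rescale)

lemma norm_rescale: "0 < M \<Longrightarrow> cmod (rescale d M a i) = cmod (a i) / M ^ (d - i)"
  by (simp add: rescale_def norm_divide norm_power)

lemma coeffs_dominated_rescale:
  "coeffs_dominated d M a \<Longrightarrow> 0 < M \<Longrightarrow> coeffs_dominated d 1 (rescale d M a)"
  unfolding coeffs_dominated_def by (simp add: norm_rescale divide_le_eq_1)

text \<open>In the coordinates \<open>u = x/M\<close> a bounded path satisfies \<open>M\<^sup>d\<^sup>-\<^sup>e f\<^sub>M(u\<^sub>n) = g\<^sub>M(u\<^sub>n\<^sub>+\<^sub>1)\<close> with
  rescaled polynomials \<open>f\<^sub>M, g\<^sub>M\<close> of bounded coefficients; since \<open>d > e\<close> the values of \<open>f\<^sub>M\<close> along the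
  path are therefore \<open>O(1/M)\<close>.\<close>
lemma rescaled_path_bounds:
  assumes de: "e < d" "1 \<le> e" and M: "1 \<le> M" "real e * 2 ^ (e + 1) + 1 \<le> M"
    and dom: "coeffs_dominated d M a" "coeffs_dominated e M b"
    and path: "is_path d e a b z x" and "bounded (range x)"
  shows "cmod (x n / of_real M) \<le> 2 * real d + 1"
    and "cmod (fpoly d (rescale d M a) (x n / of_real M)) \<le> real e * (2 * real d + 1) ^ e / M"
proof -
  have small: "cmod (x m / of_real M) \<le> 2 * real d + 1" for m
  proof -
    have "cmod (x m) < escape_radius d e M"
      using bounded_path_within_escape_radius[OF de _ dom path \<open>bounded (range x)\<close>] M by simp
    also have "\<dots> \<le> (2 * real d + 1) * M" using M unfolding escape_radius_def by (simp add: algebra_simps)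
    finally show ?thesis using M by (simp add: norm_divide field_simps)
  qed
  then show "cmod (x n / of_real M) \<le> 2 * real d + 1" .
  let ?M = "of_real M :: complex"
  have "?M ^ d * fpoly d (rescale d M a) (x n / ?M) = fpoly d a (x n)"
    using fpoly_rescale[of M d a "x n / ?M"] M by simp
  also have "\<dots> = fpoly e b (x (Suc n))"
    using path by (simp add: is_path_def)
  also have "\<dots> = ?M ^ e * fpoly e (rescale e M b) (x (Suc n) / ?M)"
    using fpoly_rescale[of M e b "x (Suc n) / ?M"] M by simp
  finally have "?M ^ d * fpoly d (rescale d M a) (x n / ?M) = ?M ^ e * fpoly e (rescale e M b) (x (Suc n) / ?M)" .
  moreover have "?M ^ d = ?M ^ (d - e) * ?M ^ e" using de by (simp flip: power_add)
  ultimately have "fpoly d (rescale d M a) (x n / ?M) = fpoly e (rescale e M b) (x (Suc n) / ?M) / ?M ^ (d - e)"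
    using M by (simp add: field_simps)
  moreover have "cmod (fpoly e (rescale e M b) (x (Suc n) / ?M)) \<le> real e * (2 * real d + 1) ^ e"
    using norm_fpoly_le[OF coeffs_dominated_rescale[OF dom(2)] _ _ small] M de by simp
  moreover have "M \<le> M ^ (d - e)" using M de by (intro self_le_power) auto
  ultimately show "cmod (fpoly d (rescale d M a) (x n / ?M)) \<le> real e * (2 * real d + 1) ^ e / M"
    using M by (simp add: norm_divide norm_power frac_le)
qed

definition unit_params :: "nat \<Rightarrow> nat \<Rightarrow> ((nat \<Rightarrow> complex) \<times> (nat \<Rightarrow> complex)) set" where
  "unit_params d e = {(a, b). (\<forall>i. cmod (a i) \<le> 1) \<and> (\<forall>j. cmod (b j) \<le> 1) \<and>
      ((\<exists>i\<in>{1..d-1}. cmod (a i) = 1) \<or> (\<exists>j\<in>{1..e-1}. cmod (b j) = 1))}"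

lemma compact_unit_params: "compact (unit_params d e)"
proof -
  let ?B = "{x :: nat \<Rightarrow> complex. \<forall>n. cmod (x n) \<le> 1}"
  have "unit_params d e = (?B \<times> ?B) \<inter>
          ((\<Union>i\<in>{1..d-1}. {p. cmod (fst p i) = 1}) \<union> (\<Union>j\<in>{1..e-1}. {p. cmod (snd p j) = 1}))"
    unfolding unit_params_def by auto
  also have "compact \<dots>"
    by (intro compact_Int_closed compact_Times compact_bounded_sequences closed_Un closed_UN ballI
          finite_atLeastAtMost closed_Collect_eq continuous_intros
          continuous_on_compose2[OF continuous_on_product_coordinates]) auto
  finally show ?thesis .
qed

lemma rescale_param_size_in_unit_params:
  assumes "(a, b) \<in> coeff_space d e" "2 \<le> d" and M: "M = param_size d e a b" "0 < M"
  shows "(rescale d M a, rescale e M b) \<in> unit_params d e"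
proof -
  have "cmod (rescale d M a i) \<le> 1" for i
    using coeffs_dominated_rescale[OF coeffs_dominated_param_size(1)] assms
    by (cases "i \<in> {1..d-1}") (auto simp: coeffs_dominated_def coeff_space_zero rescale_def)
  moreover have "cmod (rescale e M b j) \<le> 1" for j
    using coeffs_dominated_rescale[OF coeffs_dominated_param_size(2)] assms
    by (cases "j \<in> {1..e-1}") (auto simp: coeffs_dominated_def coeff_space_zero rescale_def)
  moreover have "(\<exists>i\<in>{1..d-1}. cmod (rescale d M a i) = 1) \<or> (\<exists>j\<in>{1..e-1}. cmod (rescale e M b j) = 1)"
    using param_size_attained[OF \<open>2 \<le> d\<close>, of a e b]
  proof (elim disjE bexE)
    fix i assume "i \<in> {1..d-1}" "cmod (a i) = param_size d e a b ^ (d - i)"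
    then show ?thesis using M by (intro disjI1 bexI[of _ i]) (simp_all add: norm_rescale)
  next
    fix j assume "j \<in> {1..e-1}" "cmod (b j) = param_size d e a b ^ (e - j)"
    then show ?thesis using M by (intro disjI2 bexI[of _ j]) (simp_all add: norm_rescale)
  qed
  ultimately show ?thesis unfolding unit_params_def by blast
qed

text \<open>Along parameters of sizes \<open>M\<^sub>k \<rightarrow> \<infinity>\<close> the rescaled correspondence degenerates in the
  limit to \<open>f\<^sub>a(x) = 0\<close>.\<close>
locale rescaled_unbounded_params =
  fixes d e :: nat and A B :: "nat \<Rightarrow> nat \<Rightarrow> complex" and M :: "nat \<Rightarrow> real"
    and a b :: "nat \<Rightarrow> complex"
  assumes degrees: "e < d" "1 \<le> e"
    and in_S: "\<And>k. (A k, B k) \<in> S_set d e"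
    and dominated: "\<And>k. coeffs_dominated d (M k) (A k)" "\<And>k. coeffs_dominated e (M k) (B k)"
    and positive: "\<And>k. 0 < M k"
    and unbounded: "filterlim M at_top sequentially"
    and rescaled_A: "\<And>i. (\<lambda>k. rescale d (M k) (A k) i) \<longlonglongrightarrow> a i"
    and rescaled_B: "\<And>j. (\<lambda>k. rescale e (M k) (B k) j) \<longlonglongrightarrow> b j"
begin

lemma eventually_rescaled_path_bounds:
  "eventually (\<lambda>k. \<forall>z x n. is_path d e (A k) (B k) z x \<longrightarrow> bounded (range x) \<longrightarrow>
      cmod (x n / of_real (M k)) \<le> 2 * real d + 1 \<and>
      cmod (fpoly d (rescale d (M k) (A k)) (x n / of_real (M k))) \<le> real e * (2 * real d + 1) ^ e / M k)
    sequentially"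
proof -
  have "eventually (\<lambda>k. 1 \<le> M k) sequentially"
    and "eventually (\<lambda>k. real e * 2 ^ (e + 1) + 1 \<le> M k) sequentially"
    using unbounded by (simp_all add: filterlim_at_top)
  then show ?thesis
    by eventually_elim (use rescaled_path_bounds[OF degrees] dominated in blast)
qed

lemma tendsto_const_over_M: "(\<lambda>k. C / M k) \<longlonglongrightarrow> 0"
  by (rule tendsto_divide_0[OF tendsto_const filterlim_at_top_imp_at_infinity[OF unbounded]])

lemma rescaled_f_along_paths_tendsto_0:
  assumes "\<And>k. is_path d e (A k) (B k) (z k) (X k)" "\<And>k. bounded (range (X k))"
  shows "(\<lambda>k. fpoly d (rescale d (M k) (A k)) (X k n / of_real (M k))) \<longlonglongrightarrow> 0"
proof (rule Lim_null_comparison[OF _ tendsto_const_over_M[of "real e * (2 * real d + 1) ^ e"]])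
  show "eventually (\<lambda>k. norm (fpoly d (rescale d (M k) (A k)) (X k n / of_real (M k)))
          \<le> real e * (2 * real d + 1) ^ e / M k) sequentially"
    using eventually_rescaled_path_bounds by eventually_elim (use assms in blast)
qed

lemma rescaled_paths_tendsto_0:
  assumes a: "\<forall>i\<in>{1..d-1}. a i = 0"
    and paths: "\<And>k. is_path d e (A k) (B k) (z k) (X k)" "\<And>k. bounded (range (X k))"
  shows "(\<lambda>k. X k n / of_real (M k)) \<longlonglongrightarrow> 0"
proof (rule tendsto_0_if_fpoly_tendsto_0[OF _ rescaled_A a])
  show "1 \<le> d" using degrees by simp
  show "eventually (\<lambda>k. cmod (X k n / of_real (M k)) \<le> 2 * real d + 1) sequentially"
    using eventually_rescaled_path_bounds by eventually_elim (use paths in blast)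
qed (rule rescaled_f_along_paths_tendsto_0[OF paths])

lemma critical_values_limit_f:
  assumes "deriv (fpoly d a) c = 0"
  shows "fpoly d a c = 0"
proof -
  define \<alpha> where "\<alpha> k = rescale d (M k) (A k)" for k
  obtain ck where ck: "\<And>k. deriv (fpoly d (\<alpha> k)) (ck k) = 0" "ck \<longlonglongrightarrow> c"
    using fpoly_critical_point_is_limit[of \<alpha> a, OF rescaled_A[folded \<alpha>_def] assms] by metis
  have crit: "critical_point d e (A k) (B k) (of_real (M k) * ck k)" for k
    using ck(1) deriv_fpoly_rescale_eq_0_iff[of "M k" d "A k"] positive[of k]
    unfolding critical_point_def \<alpha>_def by simp
  obtain X where X: "\<And>k. is_path d e (A k) (B k) (of_real (M k) * ck k) (X k)"
      "\<And>k. bounded (range (X k))"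
    using bounded_paths_from_critical_points[of A B, OF in_S crit] by blast
  have "X k 0 / of_real (M k) = ck k" for k
    using X(1)[of k] positive[of k] unfolding is_path_def by simp
  then have "(\<lambda>k. fpoly d (\<alpha> k) (ck k)) \<longlonglongrightarrow> 0"
    using rescaled_f_along_paths_tendsto_0[OF X, of 0] by (simp add: \<alpha>_def)
  moreover have "(\<lambda>k. fpoly d (\<alpha> k) (ck k)) \<longlonglongrightarrow> fpoly d a c"
    by (rule tendsto_fpoly[OF rescaled_A[folded \<alpha>_def] ck(2)])
  ultimately show ?thesis using LIMSEQ_unique by metis
qed

text \<open>A critical value \<open>g\<^sub>b(w)\<close> is approximated by critical values \<open>g\<^sub>B(M w\<^sub>k)\<close>, which are values
  \<open>f\<^sub>A(z\<^sub>k)\<close> at critical points; the second points \<open>u\<^sub>k\<close> of the rescaled bounded paths from \<open>z\<^sub>k\<close>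
  tend to \<open>0\<close> and satisfy \<open>g(u\<^sub>k) = g(w\<^sub>k)\<close>, so \<open>g\<^sub>b(w) = g\<^sub>b(0) = 0\<close>.\<close>
lemma critical_values_limit_g:
  assumes a: "\<forall>i\<in>{1..d-1}. a i = 0" and "deriv (fpoly e b) w = 0"
  shows "fpoly e b w = 0"
proof -
  define \<beta> where "\<beta> k = rescale e (M k) (B k)" for k
  obtain wk where wk: "\<And>k. deriv (fpoly e (\<beta> k)) (wk k) = 0" "wk \<longlonglongrightarrow> w"
    using fpoly_critical_point_is_limit[of \<beta> b, OF rescaled_B[folded \<beta>_def] assms(2)] by metis
  define W where "W k = of_real (M k) * wk k" for k
  have crit_W: "deriv (fpoly e (B k)) (W k) = 0" for k
    using wk(1) deriv_fpoly_rescale_eq_0_iff[of "M k" e "B k"] positive[of k]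
    unfolding W_def \<beta>_def by simp
  have "\<exists>z. fpoly d (A k) z = fpoly e (B k) (W k)" for k
    using fpoly_surj[of d] degrees by (metis le_trans less_imp_le)
  then obtain z where z: "\<And>k. fpoly d (A k) (z k) = fpoly e (B k) (W k)"
    by metis
  then have crit: "critical_point d e (A k) (B k) (z k)" for k
    using crit_W unfolding critical_point_def by metis
  obtain X where X: "\<And>k. is_path d e (A k) (B k) (z k) (X k)" "\<And>k. bounded (range (X k))"
    using bounded_paths_from_critical_points[of A B, OF in_S crit] by blast
  define u where "u k = X k 1 / of_real (M k)" for k
  have "fpoly e (B k) (X k 1) = fpoly e (B k) (W k)" for k
    using X(1)[of k] z[of k] unfolding is_path_def by (metis One_nat_def)
  then have same_value: "fpoly e (\<beta> k) (u k) = fpoly e (\<beta> k) (wk k)" for k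
    using fpoly_rescale_eq_iff[of "M k" e "B k" "u k" "wk k"] positive[of k]
    by (simp add: u_def W_def \<beta>_def)
  have "u \<longlonglongrightarrow> 0"
    unfolding u_def by (rule rescaled_paths_tendsto_0[OF a X])
  then have "(\<lambda>k. fpoly e (\<beta> k) (u k)) \<longlonglongrightarrow> fpoly e b 0"
    by (rule tendsto_fpoly[OF rescaled_B[folded \<beta>_def]])
  moreover have "(\<lambda>k. fpoly e (\<beta> k) (u k)) \<longlonglongrightarrow> fpoly e b w"
    unfolding same_value by (rule tendsto_fpoly[OF rescaled_B[folded \<beta>_def] wk(2)])
  ultimately have "fpoly e b w = fpoly e b 0" using LIMSEQ_unique by blast
  then show ?thesis using fpoly_0 degrees by simp
qed

end

lemma S_set_param_size_not_unbounded:
  assumes de: "e < d" "1 \<le> e" and S: "\<And>k. (A k, B k) \<in> S_set d e"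
    and large: "\<And>k. real k < param_size d e (A k) (B k)"
  shows False
proof -
  define M where "M k = param_size d e (A k) (B k)" for k
  have M_pos: "0 < M k" for k using large[of k] unfolding M_def by linarith
  have "\<forall>k. (rescale d (M k) (A k), rescale e (M k) (B k)) \<in> unit_params d e"
    using S M_pos de by (auto intro!: rescale_param_size_in_unit_params simp: S_set_def M_def)
  then obtain ab h where "ab \<in> unit_params d e" and h: "strict_mono h"
    and lim: "((\<lambda>k. (rescale d (M k) (A k), rescale e (M k) (B k))) \<circ> h) \<longlonglongrightarrow> ab"
    by (rule seq_compactE[OF compact_imp_seq_compact[OF compact_unit_params]])
  obtain a b where ab: "ab = (a, b)" by (cases ab)
  interpret rescaled_unbounded_params d e "A \<circ> h" "B \<circ> h" "M \<circ> h" a b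
  proof
    show "filterlim (M \<circ> h) at_top sequentially"
    proof (rule filterlim_at_top_mono[OF filterlim_real_sequentially])
      show "eventually (\<lambda>k. real k \<le> (M \<circ> h) k) sequentially"
        using large seq_suble[OF h] unfolding M_def
        by (intro always_eventually allI) (metis o_apply of_nat_mono order.strict_trans1 less_imp_le)
    qed
    show "(\<lambda>k. rescale d ((M \<circ> h) k) ((A \<circ> h) k) i) \<longlonglongrightarrow> a i" for i
      using tendsto_apply[OF tendsto_fst[OF lim]] by (simp add: ab o_def)
    show "(\<lambda>k. rescale e ((M \<circ> h) k) ((B \<circ> h) k) j) \<longlonglongrightarrow> b j" for j
      using tendsto_apply[OF tendsto_snd[OF lim]] by (simp add: ab o_def)
  qed (use de S M_pos coeffs_dominated_param_size in \<open>simp_all add: M_def\<close>)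
  have a: "\<forall>i\<in>{1..d-1}. a i = 0"
    using coeffs_zero_if_critical_values_zero[of d a, OF _ critical_values_limit_f] de by auto
  have "\<forall>j\<in>{1..e-1}. b j = 0"
    using coeffs_zero_if_critical_values_zero[of e b, OF _ critical_values_limit_g[OF a]] de by auto
  then show False
    using \<open>ab \<in> unit_params d e\<close> a unfolding ab unit_params_def by auto
qed

lemma param_size_bounded_on_S_set:
  assumes "e < d" "1 \<le> e"
  obtains K where "\<And>a b. (a, b) \<in> S_set d e \<Longrightarrow> param_size d e a b \<le> K"
proof -
  have "\<exists>K. \<forall>a b. (a, b) \<in> S_set d e \<longrightarrow> param_size d e a b \<le> K"
  proof (rule ccontr)
    assume "\<nexists>K. \<forall>a b. (a, b) \<in> S_set d e \<longrightarrow> param_size d e a b \<le> K"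
    then have "\<forall>k::nat. \<exists>p. p \<in> S_set d e \<and> real k < param_size d e (fst p) (snd p)"
      by (metis fst_conv snd_conv linorder_not_le)
    then obtain s where "\<And>k. s k \<in> S_set d e \<and> real k < param_size d e (fst (s k)) (snd (s k))"
      by metis
    then show False
      using S_set_param_size_not_unbounded[OF assms, of "fst \<circ> s" "snd \<circ> s"] by simp
  qed
  then show ?thesis using that by blast
qed

lemma S_set_coeffs_bounded:
  assumes "e < d" "1 \<le> e"
  obtains C where "\<And>a b i. (a, b) \<in> S_set d e \<Longrightarrow> cmod (a i) \<le> C \<and> cmod (b i) \<le> C"
proof -
  obtain K where K: "\<And>a b. (a, b) \<in> S_set d e \<Longrightarrow> param_size d e a b \<le> K"
    using param_size_bounded_on_S_set[OF assms] by blast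
  define K' where "K' = max 1 K"
  have weight_le: "param_size d e a b ^ n \<le> K' ^ d" if "(a, b) \<in> S_set d e" "n \<le> d" for a b n
  proof -
    have "param_size d e a b ^ n \<le> K' ^ n"
      using K[OF that(1)] param_size_nonneg[of d e a b] assms
      by (intro power_mono) (auto simp: K'_def)
    also have "\<dots> \<le> K' ^ d" using that(2) by (intro power_increasing) (auto simp: K'_def)
    finally show ?thesis .
  qed
  have "cmod (a i) \<le> K' ^ d \<and> cmod (b i) \<le> K' ^ d" if ab: "(a, b) \<in> S_set d e" for a b i
  proof -
    have space: "(a, b) \<in> coeff_space d e" using ab by (simp add: S_set_def)
    have "cmod (a i) \<le> K' ^ d"
    proof (cases "i \<in> {1..d-1}")
      case True
      then show ?thesis using coeffs_dominated_param_size(1)[of d e a b] weight_le[OF ab, of "d - i"]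
        unfolding coeffs_dominated_def by force
    qed (simp add: coeff_space_zero(1)[OF space] K'_def)
    moreover have "cmod (b i) \<le> K' ^ d"
    proof (cases "i \<in> {1..e-1}")
      case True
      then show ?thesis using coeffs_dominated_param_size(2)[of e d a b] weight_le[OF ab, of "e - i"] assms
        unfolding coeffs_dominated_def by force
    qed (simp add: coeff_space_zero(2)[OF space] K'_def)
    ultimately show ?thesis ..
  qed
  then show ?thesis using that by blast
qed

theorem theorem1p5:
  fixes d e :: nat
  assumes "d > e" and "e \<ge> 1"
  shows "compact (S_set d e)"
proof -
  obtain C where C: "\<And>a b i. (a, b) \<in> S_set d e \<Longrightarrow> cmod (a i) \<le> C \<and> cmod (b i) \<le> C"
    using S_set_coeffs_bounded assms by blast
  let ?B = "{x :: nat \<Rightarrow> complex. \<forall>n. cmod (x n) \<le> C}"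
  have "compact ((?B \<times> ?B) \<inter> S_set d e)"
    using assms by (intro compact_Int_closed compact_Times compact_bounded_sequences closed_S_set)
  also have "(?B \<times> ?B) \<inter> S_set d e = S_set d e" using C by auto
  finally show ?thesis .
qed

end
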